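(* Suppose a HIRB tree with $n$ items has height $H\ge\log_\beta n$, and let $X$ be the total number of nodes in the HIRB, a random variable over the choice of hash function in initializing the HIRB. Then for any $m\ge 1$, $$\Pr[X\ge H+4n+m]<0.883^m.$$
   Context: HIRB tree: parameters an integer $\beta$ (expected branching factor) and height $H$; labels are hashed by a hash function chosen (salted) at initialization, and each label receives a height $\mathsf{chooseheight}(\mathsf{label})\in\{0,\dots,H\}$ derived pseudorandomly from its hash. The HIRB is a rooted search tree with levels $H$ (root) down to $0$ (leaves), storing items sorted by label hash, such that for each level $\ell$ the nodes at level $\ell$ correspond to the intervals into which the hashes of items of height $>\ell$ partition the hash space, each such node containing exactly the items of height $\ell$ whose hash lies in its interval; a node with $k-1$ items has $k$ children. The empty HIRB is a chain of $H+1$ nodes. Standing assumption (Assumption 1): for any $n$ distinct labels stored in a HIRB, their heights are independent random samples from a geometric distribution with probability $(\beta-1)/\beta$ truncated to $\{0,1,\dots,H\}$ (i.e., $\Pr[\text{height}\ge i]=\beta^{-i}$ for $0\le i\le H$), the randomness coming entirely from the random oracle and random function chosen at creation of the HIRB. *)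

theory Defs
  imports "HOL-Probability.Probability"
begin

text \<open>Height distribution of a single label: geometric with success probability
  (beta-1)/beta (so Pr[h >= i] = beta^(-i)), truncated to {0..H} (mass above H is put on H).\<close>
definition hirb_height_pmf :: "nat \<Rightarrow> nat \<Rightarrow> nat pmf" where
  "hirb_height_pmf \<beta> H = map_pmf (\<lambda>k. min k H) (geometric_pmf ((real \<beta> - 1) / real \<beta>))"

definition hirb_heights_pmf :: "nat \<Rightarrow> nat \<Rightarrow> nat \<Rightarrow> (nat \<Rightarrow> nat) pmf" where
  "hirb_heights_pmf \<beta> H n = Pi_pmf {..<n} 0 (\<lambda>_. hirb_height_pmf \<beta> H)"

text \<open>Nodes at level l of the HIRB storing items 0..n-1 with (distinct) hashes hsh i and
  heights h i: the intervals into which the hashes of the items of height > l partition the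
  hash space. Each interval is identified by its lower boundary: None (the leftmost interval,
  unbounded below) or Some s for a separating hash s.\<close>
definition hirb_level_nodes ::
  "nat \<Rightarrow> (nat \<Rightarrow> 'k::linorder) \<Rightarrow> (nat \<Rightarrow> nat) \<Rightarrow> nat \<Rightarrow> 'k option set" where
  "hirb_level_nodes n hsh h l = insert None (Some ` {hsh i | i. i < n \<and> h i > l})"

definition hirb_num_nodes ::
  "nat \<Rightarrow> nat \<Rightarrow> (nat \<Rightarrow> 'k::linorder) \<Rightarrow> (nat \<Rightarrow> nat) \<Rightarrow> nat" where
  "hirb_num_nodes H n hsh h = (\<Sum>l\<le>H. card (hirb_level_nodes n hsh h l))"

end

theory Submission
  imports Defs
begin

text \<open>Level \<open>l\<close> has one node more than there are items of height \<open>> l\<close>, so the tree has at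
  most \<open>H + 1 + \<Sum>i. h i\<close> nodes. The heights are independent and truncated geometric with
  ratio \<open>1/\<beta> \<le> 1/2\<close>, so each has moment generating value \<open>E[t^h] \<le> 1/(2 - t)\<close> for
  \<open>1 \<le> t < 2\<close>. A Chernoff bound with \<open>t = 8/7\<close> then gives
  \<open>Pr[X \<ge> H + 4n + m] \<le> (7/8)^(4n + m - 1) (7/6)^n\<close>, and \<open>(7/8)^4 (7/6) < 0.883\<close>.\<close>

lemma card_hirb_level_nodes_le:
  "card (hirb_level_nodes n hsh h l) \<le> 1 + card {i. i < n \<and> l < h i}"
proof -
  have "{hsh i | i. i < n \<and> h i > l} = hsh ` {i. i < n \<and> l < h i}" by auto
  hence "card (Some ` {hsh i | i. i < n \<and> h i > l}) \<le> card {i. i < n \<and> l < h i}"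
    by (simp add: card_image_le image_image)
  thus ?thesis
    unfolding hirb_level_nodes_def by (intro card_insert_le_m1) simp_all
qed

lemma sum_card_levels_below_height_le:
  fixes h :: "nat \<Rightarrow> nat"
  shows "(\<Sum>l\<le>H. card {i. i < n \<and> l < h i}) \<le> (\<Sum>i<n. h i)"
proof -
  have "(\<Sum>l\<le>H. card {i. i < n \<and> l < h i}) = (\<Sum>l\<le>H. \<Sum>i<n. if l < h i then 1 else 0)"
    by (intro sum.cong refl) (simp add: sum.If_cases Collect_conj_eq lessThan_def Int_commute)
  also have "\<dots> = (\<Sum>i<n. card {l. l \<le> H \<and> l < h i})"
    by (subst sum.swap) (simp add: sum.If_cases Collect_conj_eq atMost_def Int_commute)
  also have "\<dots> \<le> (\<Sum>i<n. card {..<h i})"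
    by (intro sum_mono card_mono) auto
  finally show ?thesis by simp
qed

lemma hirb_num_nodes_le: "hirb_num_nodes H n hsh h \<le> H + 1 + (\<Sum>i<n. h i)"
proof -
  have "hirb_num_nodes H n hsh h \<le> (\<Sum>l\<le>H. 1 + card {i. i < n \<and> l < h i})"
    unfolding hirb_num_nodes_def by (intro sum_mono card_hirb_level_nodes_le)
  also have "\<dots> = H + 1 + (\<Sum>l\<le>H. card {i. i < n \<and> l < h i})"
    by (simp only: sum.distrib) simp
  finally show ?thesis
    using sum_card_levels_below_height_le[where H = H and n = n and h = h] by linarith
qed

lemma nn_integral_geometric_pmf_power:
  fixes p t :: real
  assumes "0 < p" "p \<le> 1" "0 \<le> t" "t * (1 - p) < 1"
  shows "(\<integral>\<^sup>+k. ennreal (t ^ k) \<partial>geometric_pmf p) = ennreal (p / (1 - t * (1 - p)))"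
proof -
  have tq: "0 \<le> t * (1 - p)" using assms by simp
  have "(\<integral>\<^sup>+k. ennreal (t ^ k) \<partial>geometric_pmf p) = (\<Sum>k. ennreal (p * (t * (1 - p)) ^ k))"
    unfolding nn_integral_measure_pmf nn_integral_count_space_nat
  proof (intro suminf_cong)
    fix k :: nat
    show "ennreal (pmf (geometric_pmf p) k) * ennreal (t ^ k) = ennreal (p * (t * (1 - p)) ^ k)"
      using assms by (simp add: pmf_geometric ennreal_mult'[symmetric] power_mult_distrib mult_ac)
  qed
  also have "\<dots> = ennreal (p * (1 / (1 - t * (1 - p))))"
    using assms tq by (intro suminf_ennreal_eq sums_mult geometric_sums) auto
  finally show ?thesis by simp
qed

lemma nn_integral_hirb_height_pmf_power_le:
  fixes \<beta> H :: nat and t :: real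
  assumes "\<beta> \<ge> 2" "1 \<le> t" "t < 2"
  shows "(\<integral>\<^sup>+k. ennreal (t ^ k) \<partial>hirb_height_pmf \<beta> H) \<le> ennreal (1 / (2 - t))"
proof -
  define p where "p = (real \<beta> - 1) / real \<beta>"
  have p: "1/2 \<le> p" "p \<le> 1" using assms unfolding p_def by (auto simp: field_simps)
  have "t * (1 - p) \<le> t * (1/2)" using p assms by (intro mult_left_mono) auto
  hence tq: "t * (1 - p) < 1" using assms by linarith
  have "(\<integral>\<^sup>+k. ennreal (t ^ k) \<partial>hirb_height_pmf \<beta> H)
      = (\<integral>\<^sup>+k. ennreal (t ^ min k H) \<partial>geometric_pmf p)"
    unfolding hirb_height_pmf_def p_def by simp
  also have "\<dots> \<le> (\<integral>\<^sup>+k. ennreal (t ^ k) \<partial>geometric_pmf p)"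
    by (intro nn_integral_mono ennreal_leI power_increasing) (use assms in auto)
  also have "\<dots> = ennreal (p / (1 - t * (1 - p)))"
    using p assms tq by (intro nn_integral_geometric_pmf_power) auto
  also have "p / (1 - t * (1 - p)) \<le> 1 / (2 - t)"
  proof -
    have "0 \<le> (t - 1) * (2 * p - 1)" using p assms by simp
    hence "p * (2 - t) \<le> 1 - t * (1 - p)" by (simp add: algebra_simps)
    thus ?thesis using tq assms by (simp add: divide_simps)
  qed
  finally show ?thesis by (simp add: ennreal_leI)
qed

lemma prob_Pi_pmf_sum_ge_le:
  fixes M :: "'a \<Rightarrow> nat pmf" and t c :: real
  assumes "finite I" "1 \<le> t" "0 \<le> c"
    and mgf: "\<And>i. i \<in> I \<Longrightarrow> (\<integral>\<^sup>+k. ennreal (t ^ k) \<partial>M i) \<le> ennreal c"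
  shows "measure_pmf.prob (Pi_pmf I d M) {h. A \<le> (\<Sum>i\<in>I. h i)} \<le> c ^ card I / t ^ A"
proof -
  define P where "P = Pi_pmf I d M"
  define E where "E = {h. A \<le> (\<Sum>i\<in>I. h i)}"
  have markov: "indicator E h \<le> ennreal (1 / t ^ A) * (\<Prod>i\<in>I. ennreal (t ^ h i))" for h
  proof (cases "h \<in> E")
    case True
    hence "t ^ A \<le> (\<Prod>i\<in>I. t ^ h i)"
      using assms(2) by (simp add: E_def power_sum[symmetric] power_increasing)
    hence "1 \<le> 1 / t ^ A * (\<Prod>i\<in>I. t ^ h i)"
      using assms(2) by (simp add: divide_simps)
    hence "ennreal 1 \<le> ennreal (1 / t ^ A * (\<Prod>i\<in>I. t ^ h i))" by (rule ennreal_leI)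
    also have "\<dots> = ennreal (1 / t ^ A) * (\<Prod>i\<in>I. ennreal (t ^ h i))"
      using assms(2) by (simp add: ennreal_mult'[symmetric] prod_ennreal)
    finally show ?thesis using True by simp
  qed simp
  have "emeasure P E = (\<integral>\<^sup>+h. indicator E h \<partial>P)" by simp
  also have "\<dots> \<le> (\<integral>\<^sup>+h. ennreal (1 / t ^ A) * (\<Prod>i\<in>I. ennreal (t ^ h i)) \<partial>P)"
    by (intro nn_integral_mono markov)
  also have "\<dots> = ennreal (1 / t ^ A) * (\<Prod>i\<in>I. \<integral>\<^sup>+k. ennreal (t ^ k) \<partial>M i)"
    unfolding P_def
    by (simp add: nn_integral_cmult nn_integral_prod_Pi_pmf[OF assms(1), of d M "\<lambda>_ k. ennreal (t ^ k)"])
  also have "\<dots> \<le> ennreal (1 / t ^ A) * (\<Prod>i\<in>I. ennreal c)"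
    by (intro mult_left_mono prod_mono_ennreal mgf) auto
  also have "\<dots> = ennreal (c ^ card I / t ^ A)"
    using assms(2,3) by (simp add: prod_ennreal ennreal_mult'[symmetric] ennreal_power)
  finally show ?thesis
    using assms(2,3) unfolding P_def E_def
    by (simp add: measure_pmf.emeasure_eq_measure ennreal_le_iff)
qed

lemma hirb_chernoff_constants_less:
  fixes n m :: nat
  assumes "n \<ge> 1" "m \<ge> 1"
  shows "(7/6::real) ^ n / (8/7) ^ (4 * n + (m - 1)) < 0.883 ^ m"
proof -
  have "(7/6::real) ^ n / (8/7) ^ (4 * n + (m - 1)) = (7/6) ^ n * (7/8) ^ (4 * n + (m - 1))"
    by (simp add: power_divide)
  also have "\<dots> = ((7/6) * (7/8) ^ 4) ^ n * (7/8) ^ (m - 1)"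
    by (simp only: power_add power_mult power_mult_distrib mult.assoc)
  also have "\<dots> \<le> ((7/6) * (7/8) ^ 4) ^ 1 * (7/8) ^ (m - 1)"
    using assms(1) by (intro mult_right_mono power_decreasing) (auto simp: power_divide)
  also have "\<dots> < 0.883 * 0.883 ^ (m - 1)"
    by (intro mult_less_le_imp_less power_mono) (auto simp: power_divide)
  also have "\<dots> = 0.883 ^ m"
    using assms(2) by (simp add: power_eq_if)
  finally show ?thesis .
qed

theorem lemma2:
  fixes \<beta> H n m :: nat and hsh :: "nat \<Rightarrow> 'k::linorder"
  assumes "\<beta> \<ge> 2" and "n \<ge> 1"
    and "inj_on hsh {..<n}"
    and "real H \<ge> log (real \<beta>) (real n)"
    and "m \<ge> 1"
  shows "measure_pmf.prob (hirb_heights_pmf \<beta> H n)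
           {h. hirb_num_nodes H n hsh h \<ge> H + 4 * n + m} < 0.883 ^ m"
proof -
  define A where "A = 4 * n + (m - 1)"
  have "A \<le> (\<Sum>i<n. h i)" if "hirb_num_nodes H n hsh h \<ge> H + 4 * n + m" for h
    using that hirb_num_nodes_le[of H n hsh h] assms(5) unfolding A_def by linarith
  hence "{h. hirb_num_nodes H n hsh h \<ge> H + 4 * n + m} \<subseteq> {h. A \<le> (\<Sum>i<n. h i)}"
    by blast
  hence "measure_pmf.prob (hirb_heights_pmf \<beta> H n) {h. hirb_num_nodes H n hsh h \<ge> H + 4 * n + m}
      \<le> measure_pmf.prob (hirb_heights_pmf \<beta> H n) {h. A \<le> (\<Sum>i<n. h i)}"
    by (intro measure_pmf.finite_measure_mono) auto
  also have "\<dots> \<le> (7/6) ^ card {..<n} / (8/7) ^ A"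
    unfolding hirb_heights_pmf_def
    using nn_integral_hirb_height_pmf_power_le[OF assms(1), of "8/7" H]
    by (intro prob_Pi_pmf_sum_ge_le) auto
  also have "\<dots> < 0.883 ^ m"
    using hirb_chernoff_constants_less[OF assms(2,5)] unfolding A_def by simp
  finally show ?thesis .
qed

end
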